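(* Let $w$, $w_{-\frac12}$, the nodes $(x_j,\pm y_j)$, $f_e$, $f_o$ and $\mathcal L_nf(x,y)=L_n(w_{-\frac12};f_e,x)+y\,L_n(w_{-\frac12};f_o,x)$ be as in the context, and equip the unit circle $\Omega$ with the normalized norm $$\|g\|^2_{L^2(\varpi,\Omega)}=c_w\int_{-\pi}^{\pi}|g(\cos\theta,\sin\theta)|^2w(\cos\theta)\,d\theta,\qquad c_w=\Big(\int_{-\pi}^{\pi}w(\cos\theta)\,d\theta\Big)^{-1}.$$ Then for every function $f$ on the unit circle, $$\|\mathcal L_nf\|_{L^2(\varpi,\Omega)}\le\max_{1\le j\le n}|f_e(x_j)|+\max_{1\le j\le n}|f_o(x_j)| .$$ Moreover, if $f_e$ and $f_o$ extend to continuous functions on $[-1,1]$, then $$\|\mathcal L_nf-f\|_{L^2(\varpi,\Omega)}\le 2E_{n-1}(f_e)_\infty+2E_{n-1}(f_o)_\infty,$$ and in particular $\|\mathcal L_nf-f\|_{L^2(\varpi,\Omega)}\to0$ as $n\to\infty$.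
   Context: $w$ is an even nonnegative weight on $[-1,1]$ with infinite support, $w_{-\frac12}(t)=(1-t^2)^{-\frac12}w(t)$; $x_1,\dots,x_n$ are the zeros of the orthogonal polynomial $p_n(w_{-\frac12};\cdot)$ of degree $n$, $y_j=\sqrt{1-x_j^2}$. $f_e(x)=\frac{f(x,\sqrt{1-x^2})+f(x,-\sqrt{1-x^2})}{2}$, $f_o(x)=\frac{f(x,\sqrt{1-x^2})-f(x,-\sqrt{1-x^2})}{2\sqrt{1-x^2}}$. $L_n(v;g,\cdot)$ denotes the Lagrange interpolation polynomial of degree at most $n-1$ of $g$ at the zeros of $p_n(v;\cdot)$. For continuous $g$ on $[-1,1]$, $E_m(g)_\infty=\inf_{p\in\Pi_m}\|g-p\|_{\infty}$, where $\Pi_m$ is the space of polynomials of degree at most $m$ in one variable. *)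

theory Defs
  imports "HOL-Analysis.Analysis" "HOL-Computational_Algebra.Polynomial"
begin

definition wmh :: "(real \<Rightarrow> real) \<Rightarrow> real \<Rightarrow> real" where
  "wmh w t = w t / sqrt (1 - t\<^sup>2)"

definition orth_poly :: "(real \<Rightarrow> real) \<Rightarrow> nat \<Rightarrow> real poly \<Rightarrow> bool" where
  "orth_poly v n p \<longleftrightarrow> degree p = n \<and>
     (\<forall>q :: real poly. degree q < n \<longrightarrow>
        integral {-1..1} (\<lambda>t. poly p t * poly q t * v t) = 0)"

definition lagrange_interp :: "real set \<Rightarrow> (real \<Rightarrow> real) \<Rightarrow> real \<Rightarrow> real" where
  "lagrange_interp X g t = (\<Sum>xj\<in>X. g xj * (\<Prod>xk\<in>X - {xj}. (t - xk) / (xj - xk)))"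

definition L_interp :: "real poly \<Rightarrow> (real \<Rightarrow> real) \<Rightarrow> real \<Rightarrow> real" where
  "L_interp p g = lagrange_interp {x. poly p x = 0} g"

definition f_even :: "(real \<Rightarrow> real \<Rightarrow> real) \<Rightarrow> real \<Rightarrow> real" where
  "f_even f x = (f x (sqrt (1 - x\<^sup>2)) + f x (- sqrt (1 - x\<^sup>2))) / 2"

definition f_odd :: "(real \<Rightarrow> real \<Rightarrow> real) \<Rightarrow> real \<Rightarrow> real" where
  "f_odd f x = (f x (sqrt (1 - x\<^sup>2)) - f x (- sqrt (1 - x\<^sup>2))) / (2 * sqrt (1 - x\<^sup>2))"

definition circ_interp :: "real poly \<Rightarrow> (real \<Rightarrow> real \<Rightarrow> real) \<Rightarrow> real \<Rightarrow> real \<Rightarrow> real" where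
  "circ_interp p f x y = L_interp p (f_even f) x + y * L_interp p (f_odd f) x"

definition c_w :: "(real \<Rightarrow> real) \<Rightarrow> real" where
  "c_w w = 1 / integral {-pi..pi} (\<lambda>\<theta>. w (cos \<theta>))"

definition circ_norm :: "(real \<Rightarrow> real) \<Rightarrow> (real \<Rightarrow> real \<Rightarrow> real) \<Rightarrow> real" where
  "circ_norm w g = sqrt (c_w w * integral {-pi..pi} (\<lambda>\<theta>. (g (cos \<theta>) (sin \<theta>))\<^sup>2 * w (cos \<theta>)))"

definition best_approx :: "nat \<Rightarrow> (real \<Rightarrow> real) \<Rightarrow> real" where
  "best_approx m g = (INF p\<in>{p :: real poly. degree p \<le> m}. (SUP t\<in>{-1..1}. \<bar>g t - poly p t\<bar>))"

end

theory Submission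
  imports Defs
begin

text \<open>
  On the circle, \<open>\<L>\<^sub>n f (cos \<theta>, sin \<theta>) = A (cos \<theta>) + sin \<theta> B (cos \<theta>)\<close> with \<open>A\<close>, \<open>B\<close> the
  Lagrange interpolants of \<open>f\<^sub>e\<close>, \<open>f\<^sub>o\<close> at the zeros of \<open>p\<^sub>n(w\<^sub>-\<^sub>1\<^sub>/\<^sub>2)\<close>. The cross term
  \<open>2 sin \<theta> A B\<close> is odd in \<open>\<theta>\<close> and integrates to zero, and \<open>x = cos \<theta>\<close> turns what remains into
  \<open>\<integral> (A\<^sup>2 + (1 - x\<^sup>2) B\<^sup>2) w\<^sub>-\<^sub>1\<^sub>/\<^sub>2\<close>. As \<open>A\<^sup>2\<close>, \<open>B\<^sup>2\<close> have degree below \<open>2n\<close>, Gauss quadrature with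
  nonnegative Christoffel numbers evaluates their integrals from the node values alone, which gives
  the first bound. Interpolation reproduces polynomials of degree below \<open>n\<close>, so subtracting
  near-best approximations \<open>q\<^sub>e\<close>, \<open>q\<^sub>o\<close> of \<open>f\<^sub>e\<close>, \<open>f\<^sub>o\<close> leaves the interpolant of the approximation
  error minus that error itself; bounding both terms uniformly gives the second estimate, and
  Weierstrass' theorem the convergence.
\<close>

section \<open>Lagrange interpolation and sign changes of real polynomials\<close>

definition lagrange_basis :: "real set \<Rightarrow> real \<Rightarrow> real poly" where
  "lagrange_basis X j = (\<Prod>k\<in>X - {j}. [:-k / (j - k), 1 / (j - k):])"

definition lagrange_poly :: "real set \<Rightarrow> (real \<Rightarrow> real) \<Rightarrow> real poly" where
  "lagrange_poly X g = (\<Sum>j\<in>X. smult (g j) (lagrange_basis X j))"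

lemma poly_lagrange_basis: "poly (lagrange_basis X j) t = (\<Prod>k\<in>X - {j}. (t - k) / (j - k))"
  unfolding lagrange_basis_def poly_prod
  by (intro prod.cong) (auto simp: diff_divide_distrib)

lemma lagrange_interp_eq_poly: "lagrange_interp X g t = poly (lagrange_poly X g) t"
  unfolding lagrange_interp_def lagrange_poly_def by (simp add: poly_sum poly_lagrange_basis)

lemma degree_lagrange_basis:
  assumes "finite X" "j \<in> X"
  shows "degree (lagrange_basis X j) \<le> card X - 1"
proof -
  have "degree (lagrange_basis X j) \<le> sum (degree \<circ> (\<lambda>k. [:-k / (j - k), 1 / (j - k):])) (X - {j})"
    unfolding lagrange_basis_def by (rule degree_prod_sum_le) (use assms in auto)
  also have "\<dots> \<le> (\<Sum>k\<in>X - {j}. 1)" by (rule sum_mono) simp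
  finally show ?thesis using assms by simp
qed

lemma degree_lagrange_poly:
  assumes "finite X"
  shows "degree (lagrange_poly X g) \<le> card X - 1"
  unfolding lagrange_poly_def
  by (rule degree_sum_le[OF assms])
     (use degree_lagrange_basis[OF assms] degree_smult_le order_trans in blast)

lemma poly_lagrange_basis_node:
  assumes "finite X" "j \<in> X" "k \<in> X"
  shows "poly (lagrange_basis X j) k = (if k = j then 1 else 0)"
  unfolding poly_lagrange_basis using assms
  by (auto intro: prod.neutral prod_zero bexI[of _ k])

lemma poly_lagrange_poly_node:
  assumes "finite X" "k \<in> X"
  shows "poly (lagrange_poly X g) k = g k"
proof -
  have "poly (lagrange_poly X g) k = (\<Sum>j\<in>X. if j = k then g j else 0)"
    unfolding lagrange_poly_def poly_sum using assms
    by (intro sum.cong) (auto simp: poly_lagrange_basis_node)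
  also have "\<dots> = g k" using assms by simp
  finally show ?thesis .
qed

lemma lagrange_poly_of_poly:
  assumes "finite X" "degree p < card X"
  shows "lagrange_poly X (poly p) = p"
proof (rule poly_eqI_degree[of X])
  show "degree (lagrange_poly X (poly p)) < card X"
    using degree_lagrange_poly[OF assms(1), of "poly p"] assms(2) by linarith
qed (use assms poly_lagrange_poly_node in auto)

lemma lagrange_poly_cong: "(\<And>x. x \<in> X \<Longrightarrow> g x = h x) \<Longrightarrow> lagrange_poly X g = lagrange_poly X h"
  unfolding lagrange_poly_def by (intro sum.cong) auto

lemma lagrange_poly_diff: "lagrange_poly X (\<lambda>x. g x - h x) = lagrange_poly X g - lagrange_poly X h"
  unfolding lagrange_poly_def by (simp add: smult_diff_left sum_subtractf)

lemma poly_constant_sign_on_interval: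
  fixes p :: "real poly"
  assumes "a < b" "\<forall>x\<in>{a<..<b}. poly p x \<noteq> 0"
  shows "(\<forall>x\<in>{a..b}. 0 \<le> poly p x) \<or> (\<forall>x\<in>{a..b}. 0 \<le> - poly p x)"
proof -
  have "(\<forall>x\<in>{a<..<b}. 0 \<le> poly p x) \<or> (\<forall>x\<in>{a<..<b}. 0 \<le> - poly p x)"
  proof (rule ccontr)
    assume "\<not> ?thesis"
    then obtain x y where xy: "x \<in> {a<..<b}" "y \<in> {a<..<b}" "poly p x < 0" "0 < poly p y"
      by (auto simp: not_le)
    then consider "x < y" | "y < x" by fastforce
    then obtain z where "z \<in> {a<..<b}" "poly p z = 0"
    proof cases
      case 1
      show thesis using poly_IVT_pos[OF 1 xy(3,4)] xy(1,2)
        by (metis greaterThanLessThan_iff order.strict_trans that)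
    next
      case 2
      show thesis using poly_IVT_neg[OF 2 xy(4,3)] xy(1,2)
        by (metis greaterThanLessThan_iff order.strict_trans that)
    qed
    with assms show False by blast
  qed
  moreover have "\<forall>x\<in>{a..b}. 0 \<le> c * poly p x" if "\<forall>x\<in>{a<..<b}. 0 \<le> c * poly p x" for c
  proof
    fix x assume "x \<in> {a..b}"
    moreover have "continuous_on {a..b} (\<lambda>x. c * poly p x)" by (intro continuous_intros)
    ultimately show "0 \<le> c * poly p x"
      using continuous_ge_on_closure[of "{a<..<b}" "\<lambda>x. c * poly p x" x 0] that assms(1) by simp
  qed
  ultimately show ?thesis by (metis mult_1 mult_minus1)
qed

text \<open>\<open>Z\<close> can be taken to be the roots of odd multiplicity in \<open>]a,b[\<close>.\<close>

lemma poly_mult_roots_constant_sign: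
  fixes p :: "real poly"
  assumes "a < b" "p \<noteq> 0"
  shows "\<exists>Z c. finite Z \<and> Z \<subseteq> {z\<in>{a<..<b}. poly p z = 0} \<and> c \<noteq> 0 \<and>
           (\<forall>x\<in>{a..b}. 0 \<le> c * (poly p x * (\<Prod>z\<in>Z. x - z)))"
  using assms(2)
proof (induction "degree p" arbitrary: p rule: less_induct)
  case less
  show ?case
  proof (cases "\<exists>r\<in>{a<..<b}. poly p r = 0")
    case False
    then have "\<exists>c::real. c \<noteq> 0 \<and> (\<forall>x\<in>{a..b}. 0 \<le> c * poly p x)"
      using poly_constant_sign_on_interval[OF assms(1), of p]
      by (metis mult_1 mult_minus1 zero_neq_one neg_equal_0_iff_equal)
    then show ?thesis by (intro exI[of _ "{}"]) auto
  next
    case True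
    then obtain r where r: "r \<in> {a<..<b}" "poly p r = 0" by blast
    then obtain q where q: "p = [:-r, 1:] * q" by (metis dvdE poly_eq_0_iff_dvd)
    with less.prems have "q \<noteq> 0" by auto
    have "degree q < degree p" unfolding q using \<open>q \<noteq> 0\<close> by (subst degree_mult_eq) auto
    from less.hyps[OF this \<open>q \<noteq> 0\<close>] obtain Z c where Z: "finite Z" "Z \<subseteq> {z\<in>{a<..<b}. poly q z = 0}" "c \<noteq> 0"
      and sign: "\<forall>x\<in>{a..b}. 0 \<le> c * (poly q x * (\<Prod>z\<in>Z. x - z))" by blast
    have roots_q: "{z\<in>{a<..<b}. poly q z = 0} \<subseteq> {z\<in>{a<..<b}. poly p z = 0}" using q by auto
    show ?thesis
    proof (cases "r \<in> Z")
      case True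
      have "poly p x * (\<Prod>z\<in>Z - {r}. x - z) = poly q x * (\<Prod>z\<in>Z. x - z)" for x
        using True Z(1) by (simp add: q prod.remove[of Z r] algebra_simps)
      then show ?thesis using Z roots_q sign by (intro exI[of _ "Z - {r}"] exI[of _ c]) auto
    next
      case False
      \<comment> \<open>\<open>r\<close> is a double root of the new product\<close>
      have eq: "c * (poly p x * (\<Prod>z\<in>insert r Z. x - z)) = (x - r)\<^sup>2 * (c * (poly q x * (\<Prod>z\<in>Z. x - z)))" for x
        using False Z(1) by (simp add: q power2_eq_square algebra_simps)
      have "\<forall>x\<in>{a..b}. 0 \<le> c * (poly p x * (\<Prod>z\<in>insert r Z. x - z))"
        unfolding eq using sign by (auto intro: mult_nonneg_nonneg)
      then show ?thesis using Z roots_q r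
        by (intro exI[of _ "insert r Z"] exI[of _ c]) auto
    qed
  qed
qed

section \<open>Weights on [-1,1], Gauss quadrature and Christoffel numbers\<close>

lemma nonneg_integral_eq_0_imp_negligible:
  fixes f :: "real \<Rightarrow> real"
  assumes f: "f integrable_on S" and nonneg: "\<And>x. x \<in> S \<Longrightarrow> 0 \<le> f x" and zero: "integral S f = 0"
  shows "negligible {x\<in>S. f x \<noteq> 0}"
proof -
  have f_abs: "f absolutely_integrable_on S"
    using nonnegative_absolutely_integrable_1[OF f] nonneg by blast
  have "set_lebesgue_integral lebesgue S f = 0"
    using set_lebesgue_integral_eq_integral(2)[OF f_abs] zero by simp
  then have "AE x in lebesgue. indicator S x *\<^sub>R f x = 0"
    unfolding set_lebesgue_integral_def
    by (subst integral_nonneg_eq_0_iff_AE[symmetric])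
       (use f_abs nonneg in \<open>auto simp: set_integrable_def indicator_def\<close>)
  then obtain N where "negligible N" "{x. indicator S x *\<^sub>R f x \<noteq> 0} \<subseteq> N"
    unfolding eventually_ae_filter_negligible by blast
  then show ?thesis
    by (elim negligible_subset) (auto simp: indicator_def)
qed

locale interval_weight =
  fixes v :: "real \<Rightarrow> real"
  assumes nonneg: "\<And>t. t \<in> {-1..1} \<Longrightarrow> 0 \<le> v t"
    and integrable: "v integrable_on {-1..1}"
    and mass_pos: "0 < integral {-1..1} v"
begin

definition wint :: "(real \<Rightarrow> real) \<Rightarrow> real" where
  "wint H = integral {-1..1} (\<lambda>x. H x * v x)"

lemma absolutely_integrable_continuous_weighted:
  assumes "continuous_on {-1..1} H"
  shows "(\<lambda>x. H x * v x) absolutely_integrable_on {-1..1}"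
proof (rule absolutely_integrable_bounded_measurable_product_real)
  show "H \<in> borel_measurable (lebesgue_on {-1..1})"
    by (rule continuous_imp_measurable_on_sets_lebesgue[OF assms]) auto
  show "bounded (H ` {-1..1})"
    by (rule compact_imp_bounded[OF compact_continuous_image[OF assms]]) auto
  show "v absolutely_integrable_on {-1..1}"
    using nonnegative_absolutely_integrable_1[OF integrable] nonneg by blast
qed auto

lemma integrable_continuous_weighted:
  "continuous_on {-1..1} H \<Longrightarrow> (\<lambda>x. H x * v x) integrable_on {-1..1}"
  using absolutely_integrable_continuous_weighted absolutely_integrable_on_def by blast

lemma wint_add:
  assumes "continuous_on {-1..1} F" "continuous_on {-1..1} G"
  shows "wint (\<lambda>x. F x + G x) = wint F + wint G"
  unfolding wint_def distrib_right
  by (rule integral_add) (use integrable_continuous_weighted assms in auto)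

lemma wint_scale: "wint (\<lambda>x. c * F x) = c * wint F"
  unfolding wint_def by (simp add: mult.assoc)

lemma wint_sum_poly:
  assumes "finite A"
  shows "wint (\<lambda>x. \<Sum>a\<in>A. c a * poly (e a) x) = (\<Sum>a\<in>A. c a * wint (poly (e a)))"
proof -
  have "wint (\<lambda>x. \<Sum>a\<in>A. c a * poly (e a) x)
      = (\<Sum>a\<in>A. integral {-1..1} (\<lambda>x. c a * (poly (e a) x * v x)))"
    unfolding wint_def sum_distrib_right mult.assoc
    by (rule integral_sum[OF assms])
       (auto intro!: integrable_on_mult_right integrable_continuous_weighted continuous_intros)
  then show ?thesis by (simp add: wint_def)
qed

lemma wint_mono:
  assumes "continuous_on {-1..1} F" "continuous_on {-1..1} G" "\<And>x. x \<in> {-1..1} \<Longrightarrow> F x \<le> G x"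
  shows "wint F \<le> wint G"
  unfolding wint_def
  by (rule integral_le) (use assms integrable_continuous_weighted nonneg in \<open>auto intro: mult_right_mono\<close>)

lemma wint_one_pos: "0 < wint (\<lambda>x. 1)"
  unfolding wint_def using mass_pos by simp

lemma wint_poly_pos:
  assumes "p \<noteq> 0" "\<And>x. x \<in> {-1..1} \<Longrightarrow> 0 \<le> poly p x"
  shows "0 < wint (poly p)"
proof -
  have pv_nonneg: "\<And>x. x \<in> {-1..1} \<Longrightarrow> 0 \<le> poly p x * v x"
    using assms(2) nonneg by simp
  have pv_int: "(\<lambda>x. poly p x * v x) integrable_on {-1..1}"
    by (rule integrable_continuous_weighted) (intro continuous_intros)
  have "wint (poly p) \<noteq> 0"
  proof
    assume "wint (poly p) = 0"
    then have "negligible {x\<in>{-1..1}. poly p x * v x \<noteq> 0}"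
      using nonneg_integral_eq_0_imp_negligible[OF pv_int pv_nonneg] by (simp add: wint_def)
    \<comment> \<open>away from the finitely many roots of \<open>p\<close>, the weight itself vanishes\<close>
    then have "negligible ({x\<in>{-1..1}. poly p x * v x \<noteq> 0} \<union> {x. poly p x = 0})"
      using poly_roots_finite[OF assms(1)] by (simp add: negligible_finite)
    then have "integral {-1..1} v = integral {-1..1} (\<lambda>x::real. 0::real)"
      by (rule integral_spike) (auto simp: wint_def)
    then show False using mass_pos by simp
  qed
  moreover have "0 \<le> wint (poly p)"
    unfolding wint_def using pv_int pv_nonneg by (rule integral_nonneg)
  ultimately show ?thesis by simp
qed

lemma wint_orth_poly:
  assumes "orth_poly v n p" "degree q < n"
  shows "wint (\<lambda>x. poly p x * poly q x) = 0"
  using assms unfolding orth_poly_def wint_def by blast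

lemma orth_poly_roots:
  assumes orth: "orth_poly v n p" and n: "n \<ge> 1"
  shows "finite {x. poly p x = 0}" "card {x. poly p x = 0} = n" "{x. poly p x = 0} \<subseteq> {-1<..<1}"
proof -
  define X where "X = {x. poly p x = 0}"
  have deg: "degree p = n" using orth by (simp add: orth_poly_def)
  then have p0: "p \<noteq> 0" using n by auto
  have finX: "finite X" unfolding X_def using poly_roots_finite[OF p0] .
  have cardX: "card X \<le> n" unfolding X_def using card_poly_roots_bound[OF p0] deg by simp
  obtain Z c where Z: "finite Z" "Z \<subseteq> {z\<in>{-1<..<1}. poly p z = 0}" "c \<noteq> 0"
    and sign: "\<forall>x\<in>{-1..1}. 0 \<le> c * (poly p x * (\<Prod>z\<in>Z. x - z))"
    using poly_mult_roots_constant_sign[of "-1" 1 p] p0 by auto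
  define q where "q = (\<Prod>z\<in>Z. [:-z, 1:])"
  have poly_q: "poly q x = (\<Prod>z\<in>Z. x - z)" for x by (simp add: q_def poly_prod)
  have "q \<noteq> 0" unfolding q_def using Z(1) by (simp add: prod_zero_iff)
  \<comment> \<open>otherwise \<open>p q\<close> is orthogonal to \<open>1\<close>, although \<open>c p q\<close> is nonzero and \<open>\<ge> 0\<close> on \<open>[-1,1]\<close>\<close>
  have "n \<le> card Z"
  proof (rule ccontr)
    assume "\<not> n \<le> card Z"
    then have "degree q < n" by (simp add: q_def degree_prod_eq_sum_degree)
    then have "wint (\<lambda>x. poly p x * poly q x) = 0" by (rule wint_orth_poly[OF orth])
    moreover have "0 < wint (poly (smult c (p * q)))"
      using p0 \<open>q \<noteq> 0\<close> Z(3) sign by (intro wint_poly_pos) (auto simp: poly_q)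
    moreover have "poly (smult c (p * q)) = (\<lambda>x. c * (poly p x * poly q x))" by auto
    ultimately show False using wint_scale[of c "\<lambda>x. poly p x * poly q x"] by simp
  qed
  moreover have "Z \<subseteq> X" using Z(2) X_def by auto
  moreover have "card Z \<le> card X" using card_mono[OF finX \<open>Z \<subseteq> X\<close>] .
  ultimately have "card X = n" "Z = X"
    using cardX card_subset_eq[OF finX \<open>Z \<subseteq> X\<close>] by auto
  then show "finite {x. poly p x = 0}" "card {x. poly p x = 0} = n" "{x. poly p x = 0} \<subseteq> {-1<..<1}"
    using finX Z(2) X_def by auto
qed

definition christoffel :: "real set \<Rightarrow> real \<Rightarrow> real" where
  "christoffel X j = wint (poly (lagrange_basis X j))"

lemma gauss_quadrature:
  assumes orth: "orth_poly v n p" and n: "n \<ge> 1" and deg_h: "degree h < 2 * n"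
  defines "X \<equiv> {x. poly p x = 0}"
  shows "wint (poly h) = (\<Sum>j\<in>X. christoffel X j * poly h j)"
proof -
  have deg_p: "degree p = n" and p0: "p \<noteq> 0" using orth n by (auto simp: orth_poly_def)
  have finX: "finite X" and cardX: "card X = n" using orth_poly_roots[OF orth n] by (auto simp: X_def)
  define q where "q = h div p"
  define r where "r = h mod p"
  have h_eq: "h = p * q + r" unfolding q_def r_def by simp
  have deg_r: "degree r < n" using degree_mod_less[OF p0, of h] deg_p n by (auto simp: r_def)
  have deg_q: "degree q < n"
  proof (cases "q = 0")
    case False
    have "n + degree q = degree (h - r)" using False p0 deg_p h_eq by (simp add: degree_mult_eq)
    also have "\<dots> < 2 * n" using degree_diff_le_max[of h r] deg_h deg_r by linarith
    finally show ?thesis by linarith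
  qed (use n in simp)
  have "wint (poly h) = wint (\<lambda>x. poly p x * poly q x) + wint (poly r)"
    unfolding h_eq poly_add poly_mult by (rule wint_add) (auto intro!: continuous_intros)
  also have "\<dots> = wint (poly (lagrange_poly X (poly r)))"
    using wint_orth_poly[OF orth deg_q] lagrange_poly_of_poly[OF finX, of r] deg_r cardX by simp
  also have "\<dots> = wint (\<lambda>x. \<Sum>j\<in>X. poly r j * poly (lagrange_basis X j) x)"
    unfolding lagrange_poly_def by (rule arg_cong[where f = wint]) (simp add: fun_eq_iff poly_sum)
  also have "\<dots> = (\<Sum>j\<in>X. poly r j * christoffel X j)"
    unfolding christoffel_def by (rule wint_sum_poly[OF finX])
  also have "\<dots> = (\<Sum>j\<in>X. christoffel X j * poly h j)"
    by (intro sum.cong) (auto simp: X_def h_eq)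
  finally show ?thesis by simp
qed

lemma
  assumes orth: "orth_poly v n p" and n: "n \<ge> 1"
  defines "X \<equiv> {x. poly p x = 0}"
  shows christoffel_nonneg: "j \<in> X \<Longrightarrow> 0 \<le> christoffel X j"
    and sum_christoffel: "(\<Sum>j\<in>X. christoffel X j) = wint (\<lambda>x. 1)"
proof -
  have finX: "finite X" and cardX: "card X = n" using orth_poly_roots[OF orth n] by (auto simp: X_def)
  assume j: "j \<in> X"
  define e where "e = lagrange_basis X j"
  have "degree (e * e) < 2 * n"
    using degree_mult_le[of e e] degree_lagrange_basis[OF finX j] cardX n by (simp add: e_def)
  \<comment> \<open>quadrature is exact for \<open>e\<^sup>2\<close>, which vanishes at all nodes but \<open>j\<close>\<close>
  then have "wint (poly (e * e)) = (\<Sum>k\<in>X. christoffel X k * poly (e * e) k)"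
    using gauss_quadrature[OF orth n] by (simp add: X_def)
  also have "\<dots> = (\<Sum>k\<in>X. if k = j then christoffel X k else 0)"
    by (rule sum.cong) (auto simp: e_def poly_lagrange_basis_node[OF finX j])
  also have "\<dots> = christoffel X j" using finX j by simp
  finally have "christoffel X j = wint (poly (e * e))" ..
  moreover have "0 \<le> wint (poly (e * e))"
    by (rule order.trans[OF _ wint_mono[of "\<lambda>x. 0"]]) (auto simp: wint_def intro!: continuous_intros)
  ultimately show "0 \<le> christoffel X j" by simp
next
  have "poly 1 = (\<lambda>x::real. 1::real)" by (simp add: fun_eq_iff)
  then show "(\<Sum>j\<in>X. christoffel X j) = wint (\<lambda>x. 1)"
    using gauss_quadrature[OF orth n, of 1] n by (simp add: X_def)
qed

lemma wint_lagrange_square_le: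
  assumes orth: "orth_poly v n p" and n: "n \<ge> 1"
  defines "X \<equiv> {x. poly p x = 0}"
  assumes bound: "\<And>x. x \<in> X \<Longrightarrow> \<bar>g x\<bar> \<le> M"
  shows "wint (\<lambda>x. (poly (lagrange_poly X g) x)\<^sup>2) \<le> M\<^sup>2 * wint (\<lambda>x. 1)"
proof -
  have finX: "finite X" and cardX: "card X = n" using orth_poly_roots[OF orth n] by (auto simp: X_def)
  define L where "L = lagrange_poly X g"
  have "degree (L * L) < 2 * n"
    using degree_mult_le[of L L] degree_lagrange_poly[OF finX, of g] cardX n by (simp add: L_def)
  then have "wint (poly (L * L)) = (\<Sum>j\<in>X. christoffel X j * poly (L * L) j)"
    using gauss_quadrature[OF orth n] by (simp add: X_def)
  also have "\<dots> = (\<Sum>j\<in>X. christoffel X j * (g j)\<^sup>2)"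
    by (rule sum.cong) (simp_all add: L_def poly_lagrange_poly_node[OF finX] power2_eq_square)
  also have "\<dots> \<le> (\<Sum>j\<in>X. christoffel X j * M\<^sup>2)"
  proof (rule sum_mono)
    fix j assume j: "j \<in> X"
    have "(g j)\<^sup>2 \<le> M\<^sup>2"
      using bound[OF j] by (metis abs_ge_zero abs_le_square_iff abs_of_nonneg order_trans power2_abs)
    then show "christoffel X j * (g j)\<^sup>2 \<le> christoffel X j * M\<^sup>2"
      using christoffel_nonneg[OF orth n] j by (simp add: X_def mult_left_mono)
  qed
  also have "\<dots> = M\<^sup>2 * wint (\<lambda>x. 1)"
    using sum_christoffel[OF orth n] by (simp add: X_def sum_distrib_right[symmetric])
  finally show ?thesis
    by (simp add: L_def power2_eq_square flip: poly_mult)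
qed

end

section \<open>Best uniform approximation\<close>

definition unif_dist :: "(real \<Rightarrow> real) \<Rightarrow> real poly \<Rightarrow> real" where
  "unif_dist g p = (SUP t\<in>{-1..1}. \<bar>g t - poly p t\<bar>)"

lemma best_approx_eq_INF_unif_dist: "best_approx m g = (INF p\<in>{p. degree p \<le> m}. unif_dist g p)"
  unfolding best_approx_def unif_dist_def ..

lemma abs_le_unif_dist:
  assumes "continuous_on {-1..1} g" "t \<in> {-1..1}"
  shows "\<bar>g t - poly p t\<bar> \<le> unif_dist g p"
proof -
  have "continuous_on {-1..1} (\<lambda>t. \<bar>g t - poly p t\<bar>)" by (intro continuous_intros assms(1))
  then have "bdd_above ((\<lambda>t. \<bar>g t - poly p t\<bar>) ` {-1..1})"
    by (intro bounded_imp_bdd_above compact_imp_bounded compact_continuous_image) auto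
  then show ?thesis unfolding unif_dist_def by (rule cSUP_upper[OF assms(2)])
qed

lemma unif_dist_nonneg: "continuous_on {-1..1} g \<Longrightarrow> 0 \<le> unif_dist g p"
  using abs_le_unif_dist[of g 0 p] by simp

lemma best_approx_nonneg:
  assumes "continuous_on {-1..1} g"
  shows "0 \<le> best_approx m g"
  unfolding best_approx_eq_INF_unif_dist
  by (rule cINF_greatest) (auto intro: unif_dist_nonneg[OF assms] exI[of _ 0])

lemma best_approx_le_unif_dist:
  assumes "continuous_on {-1..1} g" "degree p \<le> m"
  shows "best_approx m g \<le> unif_dist g p"
  unfolding best_approx_eq_INF_unif_dist
  by (rule cINF_lower) (use assms unif_dist_nonneg in \<open>auto intro!: bdd_belowI[of _ 0]\<close>)

lemma le_best_approx_add:
  assumes "\<And>p q. degree p \<le> m \<Longrightarrow> degree q \<le> m \<Longrightarrow> N \<le> unif_dist g p + unif_dist h q"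
  shows "N \<le> best_approx m g + best_approx m h"
proof -
  have ne: "{p :: real poly. degree p \<le> m} \<noteq> {}" by (auto intro: exI[of _ 0])
  have "N - unif_dist h q \<le> best_approx m g" if "degree q \<le> m" for q
    unfolding best_approx_eq_INF_unif_dist using assms that by (intro cINF_greatest[OF ne]) force
  then have "N - best_approx m g \<le> best_approx m h"
    unfolding best_approx_eq_INF_unif_dist[of m h]
    by (intro cINF_greatest[OF ne]) (force simp: algebra_simps)
  then show ?thesis by simp
qed

lemma real_polynomial_function_imp_poly:
  assumes "real_polynomial_function g"
  obtains p where "g = poly p"
proof -
  from assms have "\<exists>p. g = poly p"
  proof (induction rule: real_polynomial_function.induct)
    case (linear f)
    then obtain c where "f = (\<lambda>x. x * c)" using real_bounded_linear by blast
    then show ?case by (intro exI[of _ "[:0, c:]"]) (simp add: fun_eq_iff)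
  next
    case (const c)
    then show ?case by (intro exI[of _ "[:c:]"]) (simp add: fun_eq_iff)
  next
    case (add f g)
    then show ?case by (metis poly_add)
  next
    case (mult f g)
    then show ?case by (metis poly_mult)
  qed
  then show ?thesis using that by blast
qed

lemma best_approx_LIMSEQ_0:
  assumes g: "continuous_on {-1..1} g"
  shows "(\<lambda>m. best_approx m g) \<longlonglongrightarrow> 0"
proof (rule LIMSEQ_I)
  fix e :: real assume "0 < e"
  then obtain h where h: "real_polynomial_function h" "\<And>x. x \<in> {-1..1} \<Longrightarrow> \<bar>g x - h x\<bar> < e / 2"
    using Stone_Weierstrass_real_polynomial_function[OF compact_Icc g, of "e / 2"] by auto
  obtain p where p: "h = poly p" using real_polynomial_function_imp_poly[OF h(1)] .
  have "unif_dist g p \<le> e / 2"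
    unfolding unif_dist_def by (rule cSUP_least) (use h p in \<open>auto intro: less_imp_le\<close>)
  then have "norm (best_approx m g - 0) < e" if "degree p \<le> m" for m
    using best_approx_le_unif_dist[OF g that] best_approx_nonneg[OF g] \<open>0 < e\<close> by simp
  then show "\<exists>m0. \<forall>m\<ge>m0. norm (best_approx m g - 0) < e" by blast
qed

lemma best_approx_bound_LIMSEQ_0:
  assumes g: "continuous_on {-1..1} g" and h: "continuous_on {-1..1} h"
    and nonneg: "\<And>n. 0 \<le> N n"
    and bound: "\<And>n. n \<ge> 1 \<Longrightarrow> N n \<le> 2 * best_approx (n - 1) g + 2 * best_approx (n - 1) h"
  shows "N \<longlonglongrightarrow> 0"
proof (rule tendsto_sandwich[OF _ _ tendsto_const])
  have lim: "(\<lambda>n. 2 * best_approx n g + 2 * best_approx n h) \<longlonglongrightarrow> 0"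
    using tendsto_add[OF tendsto_mult[OF tendsto_const best_approx_LIMSEQ_0[OF g]]
        tendsto_mult[OF tendsto_const best_approx_LIMSEQ_0[OF h]], of 2 2]
    by simp
  show "(\<lambda>n. 2 * best_approx (n - 1) g + 2 * best_approx (n - 1) h) \<longlonglongrightarrow> 0"
    by (rule LIMSEQ_imp_Suc) (simp only: diff_Suc_1 lim)
  show "\<forall>\<^sub>F n in sequentially. N n \<le> 2 * best_approx (n - 1) g + 2 * best_approx (n - 1) h"
    using bound by (intro eventually_sequentiallyI[of 1])
qed (use nonneg in auto)

section \<open>Interpolation on the circle\<close>

lemma f_even_add_f_odd:
  assumes "s \<noteq> 0" "s\<^sup>2 = 1 - c\<^sup>2"
  shows "f_even f c + s * f_odd f c = f c s"
proof -
  have "sqrt (1 - c\<^sup>2) = \<bar>s\<bar>" using assms(2) by (metis real_sqrt_abs)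
  then show ?thesis using assms(1) unfolding f_even_def f_odd_def
    by (cases "0 < s") (auto simp: field_simps)
qed

lemma integral_odd_symmetric:
  fixes k :: "real \<Rightarrow> real"
  assumes "\<And>t. k (- t) = - k t"
  shows "integral {-a..a} k = 0"
proof -
  have "integral {-a..a} k = integral {-a..a} (\<lambda>t. k (- t))"
    using Henstock_Kurzweil_Integration.integral_reflect_real[of a "-a" k] by simp
  then show ?thesis using assms by simp
qed

lemma image_cos_0_pi: "cos ` {0..pi} = {-1..1}"
proof
  show "{-1..1} \<subseteq> cos ` {0..pi}"
  proof
    fix x :: real assume "x \<in> {-1..1}"
    then show "x \<in> cos ` {0..pi}" using arccos_bounded cos_arccos by (intro image_eqI[of _ _ "arccos x"]) auto
  qed
qed auto

lemma circ_interp_error_eq: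
  fixes p pe po :: "real poly"
  defines "X \<equiv> {x. poly p x = 0}"
  assumes finX: "finite X" and X_sub: "X \<subseteq> {-1<..<1}"
    and deg_pe: "degree pe < card X" and deg_po: "degree po < card X"
    and agree: "\<forall>x\<in>{-1<..<1}. ge x = f_even f x \<and> go x = f_odd f x"
    and circle: "c\<^sup>2 + s\<^sup>2 = 1" "s \<noteq> 0"
  shows "circ_interp p f c s - f c s
    = (poly (lagrange_poly X (\<lambda>x. ge x - poly pe x)) c + s * poly (lagrange_poly X (\<lambda>x. go x - poly po x)) c)
      - ((ge c - poly pe c) + s * (go c - poly po c))"
proof -
  have "lagrange_poly X (f_even f) = lagrange_poly X ge" "lagrange_poly X (f_odd f) = lagrange_poly X go"
    using agree X_sub by (auto intro!: lagrange_poly_cong)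
  moreover have "lagrange_poly X (poly pe) = pe" "lagrange_poly X (poly po) = po"
    using deg_pe deg_po by (auto intro!: lagrange_poly_of_poly[OF finX])
  ultimately have "circ_interp p f c s
      = poly (lagrange_poly X (\<lambda>x. ge x - poly pe x) + pe) c + s * poly (lagrange_poly X (\<lambda>x. go x - poly po x) + po) c"
    by (simp add: circ_interp_def L_interp_def lagrange_interp_eq_poly X_def[symmetric] lagrange_poly_diff)
  moreover have "c\<^sup>2 < 1" using circle by (smt (verit) zero_less_power2)
  then have "f c s = ge c + s * go c"
    using f_even_add_f_odd[OF circle(2), of c f] agree circle(1)
    by (simp add: abs_square_less_1 abs_less_iff algebra_simps)
  ultimately show ?thesis by (simp add: algebra_simps)
qed

locale circle_weight =
  fixes w :: "real \<Rightarrow> real"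
  assumes w_nonneg: "\<And>t. t \<in> {-1..1} \<Longrightarrow> 0 \<le> w t"
    and w_int: "wmh w integrable_on {-1..1}"
    and w_pos: "0 < integral {-1..1} w"

sublocale circle_weight \<subseteq> interval_weight "wmh w"
proof
  show wmh_nonneg: "0 \<le> wmh w t" if "t \<in> {-1..1}" for t
    using that w_nonneg[OF that] by (auto intro!: divide_nonneg_nonneg simp: wmh_def abs_square_le_1)
  show "wmh w integrable_on {-1..1}" by (rule w_int)
  have "integral {-1..1} (wmh w) \<noteq> 0"
  proof
    assume "integral {-1..1} (wmh w) = 0"
    then have neg: "negligible ({x\<in>{-1..1}. wmh w x \<noteq> 0} \<union> {-1, 1})"
      using nonneg_integral_eq_0_imp_negligible[OF w_int wmh_nonneg] by simp
    \<comment> \<open>not at \<open>\<plusminus>1\<close>, where \<open>wmh w = w / sqrt 0 = 0\<close> whatever \<open>w\<close> is\<close>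
    have vanish: "w x = 0" if "x \<in> {-1<..<1}" "wmh w x = 0" for x
    proof -
      have "x\<^sup>2 < 1" using that(1) by (simp add: abs_square_less_1 abs_less_iff)
      then show ?thesis using that(2) by (simp add: wmh_def)
    qed
    have "integral {-1..1} w = integral {-1..1} (\<lambda>x::real. 0::real)"
      by (rule integral_spike[OF neg]) (use vanish in auto)
    then show False using w_pos by simp
  qed
  then show "0 < integral {-1..1} (wmh w)"
    using integral_nonneg[OF w_int wmh_nonneg] by simp
qed

context circle_weight
begin

lemma has_integral_cos_weight:
  assumes H: "continuous_on {-1..1} H"
  shows "((\<lambda>\<theta>. H (cos \<theta>) * w (cos \<theta>)) has_integral 2 * wint H) {-pi..pi}"
proof -
  define f where "f = (\<lambda>x. H x * wmh w x)"
  have image: "f absolutely_integrable_on cos ` {0..pi} \<and> integral (cos ` {0..pi}) f = wint H"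
    using absolutely_integrable_continuous_weighted[OF H] by (simp add: image_cos_0_pi f_def wint_def)
  have der: "(cos has_field_derivative - sin \<theta>) (at \<theta> within {0..pi})" for \<theta>
    by (auto intro!: derivative_eq_intros)
  have "inj_on cos {0..pi}" by (auto intro!: inj_onI cos_inj_pi)
  from has_absolute_integral_change_of_variables_1'[OF _ der this] image
  have "(\<lambda>\<theta>. \<bar>- sin \<theta>\<bar> * f (cos \<theta>)) absolutely_integrable_on {0..pi} \<and>
      integral {0..pi} (\<lambda>\<theta>. \<bar>- sin \<theta>\<bar> * f (cos \<theta>)) = wint H"
    by simp
  then have "((\<lambda>\<theta>. \<bar>- sin \<theta>\<bar> * f (cos \<theta>)) has_integral wint H) {0..pi}"
    by (metis absolutely_integrable_on_def integrable_integral)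
  \<comment> \<open>for \<open>0 < \<theta> < pi\<close> the Jacobian \<open>sin \<theta>\<close> cancels the factor \<open>(1 - cos\<^sup>2 \<theta>)\<^sup>-\<^sup>1\<^sup>/\<^sup>2\<close> of \<open>wmh\<close>\<close>
  then have right: "((\<lambda>\<theta>. H (cos \<theta>) * w (cos \<theta>)) has_integral wint H) {0..pi}"
  proof (rule has_integral_spike_finite[of "{0, pi}", rotated 2])
    fix \<theta> assume "\<theta> \<in> {0..pi} - {0, pi}"
    then have "0 < sin \<theta>" by (auto intro!: sin_gt_zero)
    moreover have "sqrt (1 - (cos \<theta>)\<^sup>2) = \<bar>sin \<theta>\<bar>" by (simp add: sin_squared_eq[symmetric])
    ultimately show "H (cos \<theta>) * w (cos \<theta>) = \<bar>- sin \<theta>\<bar> * f (cos \<theta>)"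
      by (simp add: f_def wmh_def)
  qed auto
  then have "((\<lambda>\<theta>. H (cos \<theta>) * w (cos \<theta>)) has_integral wint H) {-pi..0}"
    using Henstock_Kurzweil_Integration.has_integral_reflect_real[where
        f = "\<lambda>\<theta>. H (cos \<theta>) * w (cos \<theta>)" and i = "wint H" and a = 0 and b = pi]
    by (simp only: cos_minus minus_zero)
  then have "((\<lambda>\<theta>. H (cos \<theta>) * w (cos \<theta>)) has_integral wint H + wint H) {-pi..pi}"
    by (intro has_integral_combine[OF _ _ _ right]) auto
  then show ?thesis by (simp only: mult_2)
qed

lemma c_w_eq: "c_w w = 1 / (2 * wint (\<lambda>x. 1))"
  using has_integral_cos_weight[of "\<lambda>x. 1"] by (simp add: c_w_def integral_unique)

lemma c_w_pos: "0 < c_w w"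
  using wint_one_pos by (simp add: c_w_eq)

lemma integrable_cos_weight:
  assumes K: "continuous_on {-pi..pi} K"
  shows "(\<lambda>\<theta>. K \<theta> * w (cos \<theta>)) integrable_on {-pi..pi}"
proof -
  have "(\<lambda>\<theta>. w (cos \<theta>)) absolutely_integrable_on {-pi..pi}"
    using has_integral_cos_weight[of "\<lambda>x. 1"] w_nonneg
    by (intro nonnegative_absolutely_integrable_1) (auto simp: has_integral_integrable)
  then have "(\<lambda>\<theta>. K \<theta> * w (cos \<theta>)) absolutely_integrable_on {-pi..pi}"
    using K by (intro absolutely_integrable_bounded_measurable_product_real
        continuous_imp_measurable_on_sets_lebesgue compact_imp_bounded compact_continuous_image) auto
  then show ?thesis using absolutely_integrable_on_def by blast
qed

definition circ_energy :: "(real \<Rightarrow> real) \<Rightarrow> real" where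
  "circ_energy u = c_w w * integral {-pi..pi} (\<lambda>\<theta>. (u \<theta>)\<^sup>2 * w (cos \<theta>))"

lemma circ_norm_eq_sqrt_energy: "circ_norm w g = sqrt (circ_energy (\<lambda>\<theta>. g (cos \<theta>) (sin \<theta>)))"
  by (simp add: circ_norm_def circ_energy_def)

lemma circ_energy_nonneg: "0 \<le> circ_energy u"
proof -
  have "0 \<le> integral {-pi..pi} (\<lambda>\<theta>. (u \<theta>)\<^sup>2 * w (cos \<theta>))"
    by (cases "(\<lambda>\<theta>. (u \<theta>)\<^sup>2 * w (cos \<theta>)) integrable_on {-pi..pi}")
       (auto intro!: integral_nonneg mult_nonneg_nonneg w_nonneg simp: not_integrable_integral)
  then show ?thesis using c_w_pos by (simp add: circ_energy_def)
qed

lemma circ_energy_le_sq: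
  assumes u: "continuous_on {-pi..pi} u" and bound: "\<And>\<theta>. \<theta> \<in> {-pi..pi} \<Longrightarrow> \<bar>u \<theta>\<bar> \<le> M"
  shows "circ_energy u \<le> M\<^sup>2"
proof -
  have "integral {-pi..pi} (\<lambda>\<theta>. (u \<theta>)\<^sup>2 * w (cos \<theta>)) \<le> integral {-pi..pi} (\<lambda>\<theta>. M\<^sup>2 * w (cos \<theta>))"
  proof (rule integral_le)
    fix \<theta> :: real assume "\<theta> \<in> {-pi..pi}"
    then have "(u \<theta>)\<^sup>2 \<le> M\<^sup>2"
      using bound power_mono[of "\<bar>u \<theta>\<bar>" M 2] by simp
    then show "(u \<theta>)\<^sup>2 * w (cos \<theta>) \<le> M\<^sup>2 * w (cos \<theta>)" by (simp add: mult_right_mono w_nonneg)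
  qed (use u in \<open>auto intro!: integrable_cos_weight continuous_intros\<close>)
  also have "\<dots> = M\<^sup>2 * (2 * wint (\<lambda>x. 1))"
    using integral_unique[OF has_integral_cos_weight[of "\<lambda>x. 1"]] by simp
  finally show ?thesis
    using c_w_pos mult_left_mono[of _ _ "c_w w"] by (fastforce simp: circ_energy_def c_w_eq)
qed

lemma circ_energy_pair_le:
  assumes g: "continuous_on {-1..1} g" and h: "continuous_on {-1..1} h"
    and "\<And>x. x \<in> {-1..1} \<Longrightarrow> \<bar>g x\<bar> \<le> M" "\<And>x. x \<in> {-1..1} \<Longrightarrow> \<bar>h x\<bar> \<le> N"
  shows "circ_energy (\<lambda>\<theta>. g (cos \<theta>) + sin \<theta> * h (cos \<theta>)) \<le> (M + N)\<^sup>2"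
proof (rule circ_energy_le_sq)
  have "cos ` {-pi..pi} \<subseteq> {-1..1}" by auto
  then show "continuous_on {-pi..pi} (\<lambda>\<theta>. g (cos \<theta>) + sin \<theta> * h (cos \<theta>))"
    by (intro continuous_intros continuous_on_compose2[OF g] continuous_on_compose2[OF h])
  fix \<theta> :: real
  have "\<bar>g (cos \<theta>) + sin \<theta> * h (cos \<theta>)\<bar> \<le> \<bar>g (cos \<theta>)\<bar> + \<bar>sin \<theta>\<bar> * \<bar>h (cos \<theta>)\<bar>"
    unfolding abs_mult[symmetric] by (rule abs_triangle_ineq)
  also have "\<dots> \<le> M + 1 * N"
    using assms(3,4)[of "cos \<theta>"] by (intro add_mono mult_mono) auto
  finally show "\<bar>g (cos \<theta>) + sin \<theta> * h (cos \<theta>)\<bar> \<le> M + N" by simp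
qed

lemma circ_energy_cong_finite:
  assumes "finite S" "\<And>\<theta>. \<theta> \<in> {-pi..pi} - S \<Longrightarrow> u \<theta> = v \<theta>"
  shows "circ_energy u = circ_energy v"
  unfolding circ_energy_def using assms by (subst integral_spike[of S]) (auto simp: negligible_finite)

lemma circ_energy_add_le:
  assumes "continuous_on {-pi..pi} u" "continuous_on {-pi..pi} v"
  shows "circ_energy (\<lambda>\<theta>. u \<theta> + v \<theta>) \<le> 2 * circ_energy u + 2 * circ_energy v"
proof -
  have int_u: "(\<lambda>\<theta>. (u \<theta>)\<^sup>2 * w (cos \<theta>)) integrable_on {-pi..pi}"
   and int_v: "(\<lambda>\<theta>. (v \<theta>)\<^sup>2 * w (cos \<theta>)) integrable_on {-pi..pi}"
   and int_uv: "(\<lambda>\<theta>. (u \<theta> + v \<theta>)\<^sup>2 * w (cos \<theta>)) integrable_on {-pi..pi}"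
    using assms by (auto intro!: integrable_cos_weight continuous_intros)
  have "integral {-pi..pi} (\<lambda>\<theta>. (u \<theta> + v \<theta>)\<^sup>2 * w (cos \<theta>))
      \<le> integral {-pi..pi} (\<lambda>\<theta>. 2 * ((u \<theta>)\<^sup>2 * w (cos \<theta>)) + 2 * ((v \<theta>)\<^sup>2 * w (cos \<theta>)))"
  proof (rule integral_le[OF int_uv])
    fix \<theta> :: real assume "\<theta> \<in> {-pi..pi}"
    have "(u \<theta> + v \<theta>)\<^sup>2 \<le> 2 * (u \<theta>)\<^sup>2 + 2 * (v \<theta>)\<^sup>2"
      using zero_le_power2[of "u \<theta> - v \<theta>"] by (simp add: power2_eq_square algebra_simps)
    from mult_right_mono[OF this w_nonneg[of "cos \<theta>"]]
    show "(u \<theta> + v \<theta>)\<^sup>2 * w (cos \<theta>) \<le> 2 * ((u \<theta>)\<^sup>2 * w (cos \<theta>)) + 2 * ((v \<theta>)\<^sup>2 * w (cos \<theta>))"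
      by (simp add: algebra_simps)
  qed (intro integrable_add integrable_on_mult_right int_u int_v)
  also have "\<dots> = 2 * integral {-pi..pi} (\<lambda>\<theta>. (u \<theta>)\<^sup>2 * w (cos \<theta>)) + 2 * integral {-pi..pi} (\<lambda>\<theta>. (v \<theta>)\<^sup>2 * w (cos \<theta>))"
    by (subst integral_add) (auto intro!: integrable_on_mult_right int_u int_v)
  finally have "c_w w * integral {-pi..pi} (\<lambda>\<theta>. (u \<theta> + v \<theta>)\<^sup>2 * w (cos \<theta>))
      \<le> c_w w * (2 * integral {-pi..pi} (\<lambda>\<theta>. (u \<theta>)\<^sup>2 * w (cos \<theta>))
        + 2 * integral {-pi..pi} (\<lambda>\<theta>. (v \<theta>)\<^sup>2 * w (cos \<theta>)))"
    using c_w_pos by (intro mult_left_mono) auto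
  then show ?thesis by (simp add: circ_energy_def distrib_left mult.left_commute)
qed

lemma circ_energy_poly_pair_le:
  "circ_energy (\<lambda>\<theta>. poly a (cos \<theta>) + sin \<theta> * poly b (cos \<theta>))
     \<le> (wint (\<lambda>x. (poly a x)\<^sup>2) + wint (\<lambda>x. (poly b x)\<^sup>2)) / wint (\<lambda>x. 1)"
proof -
  define H where "H = (\<lambda>x. (poly a x)\<^sup>2 + (1 - x\<^sup>2) * (poly b x)\<^sup>2)"
  define odd where "odd = (\<lambda>\<theta>. 2 * sin \<theta> * poly a (cos \<theta>) * poly b (cos \<theta>) * w (cos \<theta>))"
  have split: "(poly a (cos \<theta>) + sin \<theta> * poly b (cos \<theta>))\<^sup>2 * w (cos \<theta>) = H (cos \<theta>) * w (cos \<theta>) + odd \<theta>" for \<theta>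
    unfolding H_def odd_def sin_squared_eq[symmetric] by (simp add: power2_eq_square algebra_simps)
  have "integral {-pi..pi} (\<lambda>\<theta>. (poly a (cos \<theta>) + sin \<theta> * poly b (cos \<theta>))\<^sup>2 * w (cos \<theta>))
      = integral {-pi..pi} (\<lambda>\<theta>. H (cos \<theta>) * w (cos \<theta>)) + integral {-pi..pi} odd"
    unfolding split
  proof (rule integral_add)
    show "(\<lambda>\<theta>. H (cos \<theta>) * w (cos \<theta>)) integrable_on {-pi..pi}"
      by (rule integrable_cos_weight) (auto simp: H_def intro!: continuous_intros)
    show "odd integrable_on {-pi..pi}"
      using integrable_cos_weight[of "\<lambda>\<theta>. 2 * sin \<theta> * poly a (cos \<theta>) * poly b (cos \<theta>)"]
      by (simp add: odd_def continuous_intros)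
  qed
  also have "integral {-pi..pi} odd = 0"
    by (rule integral_odd_symmetric) (simp add: odd_def)
  also have "integral {-pi..pi} (\<lambda>\<theta>. H (cos \<theta>) * w (cos \<theta>)) = 2 * wint H"
    by (rule integral_unique[OF has_integral_cos_weight]) (auto simp: H_def intro!: continuous_intros)
  also have "wint H = wint (\<lambda>x. (poly a x)\<^sup>2) + wint (\<lambda>x. (1 - x\<^sup>2) * (poly b x)\<^sup>2)"
    unfolding H_def by (rule wint_add) (auto intro!: continuous_intros)
  also have "wint (\<lambda>x. (1 - x\<^sup>2) * (poly b x)\<^sup>2) \<le> wint (\<lambda>x. (poly b x)\<^sup>2)"
    by (rule wint_mono) (auto intro!: continuous_intros simp: algebra_simps)
  finally show ?thesis
    using wint_one_pos by (simp add: circ_energy_def c_w_eq field_simps)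
qed

lemma circ_energy_lagrange_pair_le:
  assumes orth: "orth_poly (wmh w) n p" and n: "n \<ge> 1"
  defines "X \<equiv> {x. poly p x = 0}"
  assumes "\<And>x. x \<in> X \<Longrightarrow> \<bar>g x\<bar> \<le> M" "\<And>x. x \<in> X \<Longrightarrow> \<bar>h x\<bar> \<le> N"
  shows "circ_energy (\<lambda>\<theta>. poly (lagrange_poly X g) (cos \<theta>) + sin \<theta> * poly (lagrange_poly X h) (cos \<theta>))
           \<le> M\<^sup>2 + N\<^sup>2"
proof -
  have "wint (\<lambda>x. (poly (lagrange_poly X g) x)\<^sup>2) + wint (\<lambda>x. (poly (lagrange_poly X h) x)\<^sup>2)
      \<le> (M\<^sup>2 + N\<^sup>2) * wint (\<lambda>x. 1)"
    using wint_lagrange_square_le[OF orth n, of g M] wint_lagrange_square_le[OF orth n, of h N] assms(4,5)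
    by (simp add: X_def distrib_right)
  then show ?thesis
    by (intro order.trans[OF circ_energy_poly_pair_le]) (simp add: pos_divide_le_eq[OF wint_one_pos])
qed

lemma circ_interp_eq_lagrange:
  "circ_interp p f x y = poly (lagrange_poly {x. poly p x = 0} (f_even f)) x
     + y * poly (lagrange_poly {x. poly p x = 0} (f_odd f)) x"
  by (simp add: circ_interp_def L_interp_def lagrange_interp_eq_poly)

lemma circ_norm_circ_interp_le:
  assumes orth: "orth_poly (wmh w) n p" and n: "n \<ge> 1"
  defines "X \<equiv> {x. poly p x = 0}"
  shows "circ_norm w (circ_interp p f)
           \<le> Max ((\<lambda>x. \<bar>f_even f x\<bar>) ` X) + Max ((\<lambda>x. \<bar>f_odd f x\<bar>) ` X)"
proof -
  have finX: "finite X" and "card X = n" using orth_poly_roots[OF orth n] by (auto simp: X_def)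
  then have "X \<noteq> {}" using n by auto
  define M where "M g = Max ((\<lambda>x. \<bar>g x\<bar>) ` X)" for g :: "real \<Rightarrow> real"
  have le_M: "\<bar>g x\<bar> \<le> M g" if "x \<in> X" for g x
    unfolding M_def using finX that by (intro Max_ge) auto
  have M_nonneg: "0 \<le> M g" for g
    using le_M[of _ g] \<open>X \<noteq> {}\<close> by (meson abs_ge_zero ex_in_conv order.trans)
  have "circ_norm w (circ_interp p f) \<le> sqrt ((M (f_even f))\<^sup>2 + (M (f_odd f))\<^sup>2)"
    unfolding circ_norm_eq_sqrt_energy circ_interp_eq_lagrange
    using circ_energy_lagrange_pair_le[OF orth n, of "f_even f" _ "f_odd f"] le_M
    by (simp add: X_def)
  also have "\<dots> \<le> M (f_even f) + M (f_odd f)"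
    using M_nonneg by (intro real_le_lsqrt) (auto simp: power2_sum)
  finally show ?thesis by (simp add: M_def)
qed

lemma circ_norm_interp_error_le:
  assumes orth: "orth_poly (wmh w) n p" and n: "n \<ge> 1"
    and ge: "continuous_on {-1..1} ge" and go: "continuous_on {-1..1} go"
    and agree: "\<forall>x\<in>{-1<..<1}. ge x = f_even f x \<and> go x = f_odd f x"
    and deg_pe: "degree pe \<le> n - 1" and deg_po: "degree po \<le> n - 1"
  shows "circ_norm w (\<lambda>x y. circ_interp p f x y - f x y) \<le> 2 * unif_dist ge pe + 2 * unif_dist go po"
proof -
  define X where "X = {x. poly p x = 0}"
  have finX: "finite X" and cardX: "card X = n" and X_sub: "X \<subseteq> {-1<..<1}"
    using orth_poly_roots[OF orth n] by (auto simp: X_def)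
  define ee eo where "ee = (\<lambda>x. ge x - poly pe x)" and "eo = (\<lambda>x. go x - poly po x)"
  define Se So where "Se = unif_dist ge pe" and "So = unif_dist go po"
  have Se: "\<And>x. x \<in> {-1..1} \<Longrightarrow> \<bar>ee x\<bar> \<le> Se" "0 \<le> Se"
    using abs_le_unif_dist[OF ge] unif_dist_nonneg[OF ge] by (auto simp: Se_def ee_def)
  have So: "\<And>x. x \<in> {-1..1} \<Longrightarrow> \<bar>eo x\<bar> \<le> So" "0 \<le> So"
    using abs_le_unif_dist[OF go] unif_dist_nonneg[OF go] by (auto simp: So_def eo_def)
  have cont: "continuous_on {-1..1} ee" "continuous_on {-1..1} eo"
    unfolding ee_def eo_def by (intro continuous_intros ge go)+
  define U V where "U \<theta> = poly (lagrange_poly X ee) (cos \<theta>) + sin \<theta> * poly (lagrange_poly X eo) (cos \<theta>)"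
    and "V \<theta> = ee (cos \<theta>) + sin \<theta> * eo (cos \<theta>)" for \<theta>
  have "cos ` {-pi..pi} \<subseteq> {-1..1}" by auto
  then have cont_UV: "continuous_on {-pi..pi} U" "continuous_on {-pi..pi} V"
    unfolding U_def V_def by (intro continuous_intros continuous_on_compose2[OF cont(1)] continuous_on_compose2[OF cont(2)])+
  have deg: "degree pe < card X" "degree po < card X" using deg_pe deg_po cardX n by linarith+
  have "circ_energy (\<lambda>\<theta>. circ_interp p f (cos \<theta>) (sin \<theta>) - f (cos \<theta>) (sin \<theta>))
      = circ_energy (\<lambda>\<theta>. U \<theta> + - V \<theta>)"
  proof (rule circ_energy_cong_finite[of "{-pi, 0, pi}"])
    fix \<theta> assume "\<theta> \<in> {-pi..pi} - {-pi, 0, pi}"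
    then have "sin \<theta> \<noteq> 0" using sin_eq_0_pi[of \<theta>] by auto
    from circ_interp_error_eq[OF finX[unfolded X_def] X_sub[unfolded X_def] deg[unfolded X_def]
        agree sin_cos_squared_add2 this]
    show "circ_interp p f (cos \<theta>) (sin \<theta>) - f (cos \<theta>) (sin \<theta>) = U \<theta> + - V \<theta>"
      by (simp add: U_def V_def X_def ee_def eo_def)
  qed simp
  also have "\<dots> \<le> 2 * circ_energy U + 2 * circ_energy V"
    using circ_energy_add_le[of U "\<lambda>\<theta>. - V \<theta>"] cont_UV by (simp add: circ_energy_def continuous_on_minus)
  also have "circ_energy U \<le> Se\<^sup>2 + So\<^sup>2"
    unfolding U_def by (rule circ_energy_lagrange_pair_le[OF orth n, folded X_def]) (use Se So X_sub in auto)
  also have "circ_energy V \<le> (Se + So)\<^sup>2"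
    unfolding V_def by (rule circ_energy_pair_le[OF cont]) (use Se So in auto)
  also have "2 * (Se\<^sup>2 + So\<^sup>2) + 2 * (Se + So)\<^sup>2 \<le> (2 * Se + 2 * So)\<^sup>2"
    using mult_nonneg_nonneg[OF Se(2) So(2)] by (simp add: power2_eq_square algebra_simps)
  finally have "circ_energy (\<lambda>\<theta>. circ_interp p f (cos \<theta>) (sin \<theta>) - f (cos \<theta>) (sin \<theta>))
      \<le> (2 * Se + 2 * So)\<^sup>2" by simp
  then show ?thesis
    unfolding circ_norm_eq_sqrt_energy Se_def[symmetric] So_def[symmetric]
    using Se(2) So(2) by (intro real_le_lsqrt) simp_all
qed

lemma circ_norm_interp_error_le_best_approx:
  assumes orth: "orth_poly (wmh w) n p" and n: "n \<ge> 1"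
    and "continuous_on {-1..1} ge" "continuous_on {-1..1} go"
    and "\<forall>x\<in>{-1<..<1}. ge x = f_even f x \<and> go x = f_odd f x"
  shows "circ_norm w (\<lambda>x y. circ_interp p f x y - f x y)
           \<le> 2 * best_approx (n - 1) ge + 2 * best_approx (n - 1) go"
proof -
  have "circ_norm w (\<lambda>x y. circ_interp p f x y - f x y) / 2 \<le> best_approx (n - 1) ge + best_approx (n - 1) go"
    using circ_norm_interp_error_le[OF orth n assms(3-5)] by (intro le_best_approx_add) force
  then show ?thesis by simp
qed

end

theorem theorem8p2:
  fixes w :: "real \<Rightarrow> real" and P :: "nat \<Rightarrow> real poly"
  assumes w_nonneg: "\<And>t. t \<in> {-1..1} \<Longrightarrow> w t \<ge> 0"
    and w_even: "\<And>t. w (- t) = w t"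
    and w_int: "wmh w integrable_on {-1..1}"
    and w_pos: "integral {-1..1} w > 0"
    and P_orth: "\<And>n. orth_poly (wmh w) n (P n)"
  shows "(\<forall>n\<ge>1. \<forall>f :: real \<Rightarrow> real \<Rightarrow> real.
            circ_norm w (circ_interp (P n) f)
              \<le> Max ((\<lambda>x. \<bar>f_even f x\<bar>) ` {x. poly (P n) x = 0})
                + Max ((\<lambda>x. \<bar>f_odd f x\<bar>) ` {x. poly (P n) x = 0}))
       \<and> (\<forall>(f :: real \<Rightarrow> real \<Rightarrow> real) ge go.
            continuous_on {-1..1} ge \<and> continuous_on {-1..1} go \<and>
            (\<forall>x\<in>{-1<..<1}. ge x = f_even f x \<and> go x = f_odd f x) \<longrightarrow>
            (\<forall>n\<ge>1. circ_norm w (\<lambda>x y. circ_interp (P n) f x y - f x y)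
                       \<le> 2 * best_approx (n - 1) ge + 2 * best_approx (n - 1) go)
            \<and> (\<lambda>n. circ_norm w (\<lambda>x y. circ_interp (P n) f x y - f x y)) \<longlonglongrightarrow> 0)"
proof -
  interpret circle_weight w using w_nonneg w_int w_pos by unfold_locales
  show ?thesis
  proof (intro conjI allI impI)
    fix n :: nat and f :: "real \<Rightarrow> real \<Rightarrow> real" assume "n \<ge> 1"
    then show "circ_norm w (circ_interp (P n) f)
        \<le> Max ((\<lambda>x. \<bar>f_even f x\<bar>) ` {x. poly (P n) x = 0}) + Max ((\<lambda>x. \<bar>f_odd f x\<bar>) ` {x. poly (P n) x = 0})"
      by (rule circ_norm_circ_interp_le[OF P_orth])
  next
    fix f ge go and n :: nat
    assume "continuous_on {-1..1} ge \<and> continuous_on {-1..1} go \<and>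
      (\<forall>x\<in>{-1<..<1}. ge x = f_even f x \<and> go x = f_odd f x)" "n \<ge> 1"
    then show "circ_norm w (\<lambda>x y. circ_interp (P n) f x y - f x y)
        \<le> 2 * best_approx (n - 1) ge + 2 * best_approx (n - 1) go"
      using circ_norm_interp_error_le_best_approx[OF P_orth] by blast
  next
    fix f ge go
    assume "continuous_on {-1..1} ge \<and> continuous_on {-1..1} go \<and>
      (\<forall>x\<in>{-1<..<1}. ge x = f_even f x \<and> go x = f_odd f x)"
    then show "(\<lambda>n. circ_norm w (\<lambda>x y. circ_interp (P n) f x y - f x y)) \<longlonglongrightarrow> 0"
      using circ_norm_interp_error_le_best_approx[OF P_orth]
      by (intro best_approx_bound_LIMSEQ_0[of ge go]) (auto simp: circ_norm_eq_sqrt_energy circ_energy_nonneg)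
  qed
qed

end
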